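(* Let $p=3$. Let $\tau_1=(\tau_1(i))_{1\le i\le 4}$ be an assigned family of four abelian type invariants (types of finite abelian $3$-groups). Then the set $\mathrm{Cnt}_3^2((1^2),\tau_1)$ of isomorphism classes of finite metabelian $3$-groups $\mathfrak{M}$ such that $\mathfrak{M}/\mathfrak{M}'$ is of type $(1^2)$, i.e. $\mathfrak{M}/\mathfrak{M}'\simeq C_3\times C_3$, and $\tau_1\mathfrak{M}=(H/H')_{H\in\mathrm{Lyr}_1\mathfrak{M}}\simeq\tau_1$ (as families of abelian type invariants, up to reordering) is finite.
   Context: For a finite $p$-group (or pro-$p$ group) $G$ with $G/G'$ finite and $n\ge 0$, $\mathrm{Lyr}_n G$ denotes the set of subgroups $H$ with $G'\le H\le G$ and $(G:H)=p^n$. For $G/G'$ of type $(p,p)$, $\mathrm{Lyr}_1 G$ consists of the $p+1$ maximal subgroups of $G$. Abelian type invariants are written in logarithmic notation: a type $(a_1,a_2,\dots)$ with $a_1\ge a_2\ge\dots$ stands for $C_{p^{a_1}}\times C_{p^{a_2}}\times\cdots$, e.g. $21$ means $C_9\times C_3$, $1^2$ means $C_3\times C_3$, $1^3$ means $C_3^3$; an exponent on a parenthesized type such as $(21)^3$ denotes that many repeated components. *)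

theory Defs
  imports "HOL-Algebra.Algebra" "HOL-Library.Multiset"
begin

text \<open>Abelian type invariants are multisets of positive exponents (logarithmic notation).\<close>

definition cyc_prod :: "nat \<Rightarrow> nat multiset \<Rightarrow> (nat \<Rightarrow> int) monoid" where
  "cyc_prod p t = product_group {..<size t}
      (\<lambda>i. integer_mod_group (p ^ (sorted_list_of_multiset t ! i)))"

definition has_abelian_type :: "nat \<Rightarrow> ('a, 'b) monoid_scheme \<Rightarrow> nat multiset \<Rightarrow> bool" where
  "has_abelian_type p A t \<longleftrightarrow> (\<forall>a \<in># t. a \<ge> 1) \<and> A \<cong> cyc_prod p t"

definition abelianization :: "('a, 'b) monoid_scheme \<Rightarrow> 'a set \<Rightarrow> 'a set monoid" where
  "abelianization G H = (G\<lparr>carrier := H\<rparr>) Mod (derived G H)"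

definition metabelian :: "('a, 'b) monoid_scheme \<Rightarrow> bool" where
  "metabelian G \<longleftrightarrow> derived G (derived G (carrier G)) = {\<one>\<^bsub>G\<^esub>}"

definition Lyr :: "nat \<Rightarrow> nat \<Rightarrow> ('a, 'b) monoid_scheme \<Rightarrow> 'a set set" where
  "Lyr p n G = {H. subgroup H G \<and> derived G (carrier G) \<subseteq> H \<and> card (rcosets\<^bsub>G\<^esub> H) = p ^ n}"

definition Cnt_cond :: "nat \<Rightarrow> (nat \<Rightarrow> nat multiset) \<Rightarrow> ('a, 'b) monoid_scheme \<Rightarrow> bool" where
  "Cnt_cond p \<tau> G \<longleftrightarrow>
     group G \<and> finite (carrier G) \<and> (\<exists>n. card (carrier G) = p ^ n) \<and> metabelian G \<and>
     has_abelian_type p (abelianization G (carrier G)) {#1, 1#} \<and>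
     (\<exists>\<sigma>. bij_betw \<sigma> {..<p + 1} (Lyr p 1 G) \<and>
        (\<forall>i < p + 1. has_abelian_type p (abelianization G (\<sigma> i)) (\<tau> i)))"

end

theory Submission
  imports Defs
begin

text \<open>Write \<open>M = G'\<close>. As \<open>G/M \<cong> C\<^sub>3 \<times> C\<^sub>3\<close>, conjugation by elements \<open>a, b\<close> that generate \<open>G\<close>
  modulo \<open>M\<close> induces commuting automorphisms \<open>\<alpha>, \<beta>\<close> of order dividing 3 of the abelian group \<open>M\<close>,
  and \<open>(\<alpha> - 1)(\<beta> - 1)(\<alpha>\<beta> - 1)(\<alpha>\<beta>\<^sup>2 - 1) = 0\<close>. Since \<open>\<alpha> - 1\<close> is the commutator map \<open>[a, -]\<close>
  on \<open>M\<close>, the order of \<open>M\<close> is at most the product of the kernels of \<open>[e, -]\<close> for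
  \<open>e = a, b, ab, ab\<^sup>2\<close>. Each such \<open>e\<close> lies in a maximal subgroup \<open>H = \<langle>e, M\<rangle>\<close>, and \<open>H' \<subseteq> [e, M]\<close>,
  so \<open>3 |ker [e, -]| \<le> |H/H'|\<close>, which is prescribed by \<open>\<tau>\<^sub>1\<close>. Hence \<open>|G| = 9 |M|\<close> is bounded, and
  there are only finitely many groups of bounded order up to isomorphism.\<close>

definition commutator :: "('a, 'b) monoid_scheme \<Rightarrow> 'a \<Rightarrow> 'a \<Rightarrow> 'a" where
  "commutator G x y = x \<otimes>\<^bsub>G\<^esub> y \<otimes>\<^bsub>G\<^esub> inv\<^bsub>G\<^esub> x \<otimes>\<^bsub>G\<^esub> inv\<^bsub>G\<^esub> y"

lemma card_le_card_image_mult: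
  assumes "finite A" and "\<And>y. y \<in> f ` A \<Longrightarrow> card {x \<in> A. f x = y} \<le> k"
  shows "card A \<le> card (f ` A) * k"
proof -
  have "card A = card (\<Union>y \<in> f ` A. {x \<in> A. f x = y})" by (rule arg_cong[where f = card]) blast
  also have "\<dots> \<le> (\<Sum>y \<in> f ` A. card {x \<in> A. f x = y})"
    using assms(1) by (intro card_UN_le) simp
  also have "\<dots> \<le> card (f ` A) * k"
    using sum_bounded_above[of "f ` A" "\<lambda>y. card {x \<in> A. f x = y}" k] assms(2) by simp
  finally show ?thesis .
qed

lemma card_eq_card_image_mult:
  assumes "finite A" and "\<And>y. y \<in> f ` A \<Longrightarrow> card {x \<in> A. f x = y} = k"
  shows "card A = card (f ` A) * k"
proof -
  have "card A = card (\<Union>y \<in> f ` A. {x \<in> A. f x = y})" by (rule arg_cong[where f = card]) blast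
  also have "\<dots> = (\<Sum>y \<in> f ` A. card {x \<in> A. f x = y})"
    using assms(1) by (intro card_UN_disjoint) auto
  finally show ?thesis using assms(2) by simp
qed

context group begin

lemma mult_inv_cancel_left [simp]: "x \<in> carrier G \<Longrightarrow> y \<in> carrier G \<Longrightarrow> x \<otimes> (inv x \<otimes> y) = y"
  by (simp add: m_assoc[symmetric])

lemma inv_mult_cancel_left [simp]: "x \<in> carrier G \<Longrightarrow> y \<in> carrier G \<Longrightarrow> inv x \<otimes> (x \<otimes> y) = y"
  by (simp add: m_assoc[symmetric])

lemma commutator_closed [simp]:
  "x \<in> carrier G \<Longrightarrow> y \<in> carrier G \<Longrightarrow> commutator G x y \<in> carrier G"
  by (simp add: commutator_def)

lemma inv_commutator:
  "x \<in> carrier G \<Longrightarrow> y \<in> carrier G \<Longrightarrow> inv (commutator G x y) = commutator G y x"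
  by (simp add: commutator_def inv_mult_group m_assoc)

lemma commutator_mult_left:
  "x \<in> carrier G \<Longrightarrow> y \<in> carrier G \<Longrightarrow> z \<in> carrier G \<Longrightarrow>
   commutator G (x \<otimes> y) z = x \<otimes> commutator G y z \<otimes> inv x \<otimes> commutator G x z"
  by (simp add: commutator_def inv_mult_group m_assoc)

lemma commutator_inv_left:
  "x \<in> carrier G \<Longrightarrow> y \<in> carrier G \<Longrightarrow> commutator G (inv x) y = inv x \<otimes> inv (commutator G x y) \<otimes> x"
  by (simp add: commutator_def inv_mult_group m_assoc)

lemma commutator_one_left [simp]: "y \<in> carrier G \<Longrightarrow> commutator G \<one> y = \<one>"
  by (simp add: commutator_def)

lemma commutator_eq_one_iff:
  "x \<in> carrier G \<Longrightarrow> y \<in> carrier G \<Longrightarrow> commutator G x y = \<one> \<longleftrightarrow> x \<otimes> y = y \<otimes> x"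
  unfolding commutator_def
  by (metis inv_closed inv_mult_group inv_solve_right' m_assoc m_closed r_inv r_one)

lemma commutator_mem_derived:
  "x \<in> H \<Longrightarrow> y \<in> H \<Longrightarrow> commutator G x y \<in> derived G H"
  unfolding derived_def commutator_def by (rule generate.incl) blast

lemma commutator_conj:
  assumes "g \<in> carrier G" "x \<in> carrier G" "y \<in> carrier G"
  shows "g \<otimes> commutator G x y \<otimes> inv g = commutator G (g \<otimes> x \<otimes> inv g) (g \<otimes> y \<otimes> inv g)"
  using assms by (simp add: commutator_def inv_mult_group m_assoc)

lemma subgroup_commutes_mod:
  assumes K: "K \<lhd> G" and h: "h \<in> carrier G"
  shows "subgroup {x \<in> carrier G. commutator G x h \<in> K} G"
proof (rule subgroupI)
  interpret K: normal K G by (rule K)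
  show "{x \<in> carrier G. commutator G x h \<in> K} \<noteq> {}" using h by auto
  show "inv x \<in> {x \<in> carrier G. commutator G x h \<in> K}" if "x \<in> {x \<in> carrier G. commutator G x h \<in> K}" for x
    using that h commutator_inv_left K.inv_op_closed1 by simp
  show "x \<otimes> y \<in> {x \<in> carrier G. commutator G x h \<in> K}"
    if "x \<in> {x \<in> carrier G. commutator G x h \<in> K}" "y \<in> {x \<in> carrier G. commutator G x h \<in> K}" for x y
    using that h commutator_mult_left K.inv_op_closed2 by simp
qed auto

text \<open>First every element commutes modulo \<open>K\<close> with the generators, then with every element.\<close>
lemma derived_generate_subset:
  assumes K: "K \<lhd> G" and S: "S \<subseteq> carrier G"
    and comm: "\<And>g h. g \<in> S \<Longrightarrow> h \<in> S \<Longrightarrow> commutator G g h \<in> K"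
  shows "derived G (generate G S) \<subseteq> K"
proof -
  interpret K: normal K G by (rule K)
  have gen_sub: "generate G S \<subseteq> carrier G" using generate_incl[OF S] .
  have gen: "generate G S \<subseteq> {x \<in> carrier G. commutator G x h \<in> K}" if "h \<in> carrier G"
    and "\<And>g. g \<in> S \<Longrightarrow> commutator G g h \<in> K" for h
    using that S by (intro generate_subgroup_incl subgroup_commutes_mod K) auto
  have step1: "commutator G x h \<in> K" if "x \<in> generate G S" "h \<in> S" for x h
    using gen[of h] that comm S by blast
  have "commutator G x y \<in> K" if "x \<in> generate G S" "y \<in> generate G S" for x y
  proof -
    have "commutator G g y \<in> K" if "g \<in> S" for g
      using step1[OF \<open>y \<in> generate G S\<close> that] inv_commutator gen_sub S that \<open>y \<in> generate G S\<close>
      by (metis K.subgroup_axioms subgroup.m_inv_closed subsetD)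
    then show ?thesis using gen[of y] that gen_sub by blast
  qed
  then have "derived_set G (generate G S) \<subseteq> K" unfolding commutator_def by blast
  then show ?thesis unfolding derived_def by (rule generate_subgroup_incl) (rule K.subgroup_axioms)
qed

lemma card_subgroup_dvd:
  assumes "subgroup A G" "subgroup B G" "A \<subseteq> B"
  shows "card A dvd card B"
proof -
  interpret B: group "G\<lparr>carrier := B\<rparr>" using subgroup_imp_group assms(2) .
  have "subgroup A (G\<lparr>carrier := B\<rparr>)" using subgroup_incl assms .
  from B.lagrange[OF this] have "card (rcosets\<^bsub>G\<lparr>carrier := B\<rparr>\<^esub> A) * card A = card B"
    by (simp add: order_def)
  then show ?thesis by (metis dvd_triv_right)
qed

lemma subgroup_prime_index_subset:
  assumes N: "subgroup N G" and H: "subgroup H G" "finite H" "N \<subseteq> H"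
    and p: "Factorial_Ring.prime (p::nat)" "card H = p * card N"
    and e: "e \<in> H" "e \<notin> N"
    and S: "subgroup S G" "e \<in> S" "N \<subseteq> S"
  shows "H \<subseteq> S"
proof -
  define T where "T = S \<inter> H"
  have T: "subgroup T G" unfolding T_def by (rule subgroups_Inter_pair[OF S(1) H(1)])
  have NT: "N \<subset> T" using e S H(3) unfolding T_def by blast
  have TH: "T \<subseteq> H" unfolding T_def by blast
  obtain u where u: "card T = card N * u" using card_subgroup_dvd[OF N T] NT by (auto elim: dvdE)
  obtain v where v: "card H = card T * v" using card_subgroup_dvd[OF T H(1) TH] by (auto elim: dvdE)
  have "card N > 0" using H(2,3) subgroup.one_closed[OF N] by (auto simp: card_gt_0_iff intro: finite_subset)
  then have "u * v = p" using u v p(2) by (simp add: mult.assoc)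
  moreover have "card N < card T" using NT TH H(2) by (meson finite_subset psubset_card_mono)
  then have "u \<noteq> 1" using u by auto
  ultimately have "v = 1" using p(1) by (metis prime_product)
  then have "T = H" using v card_subset_eq[OF H(2) TH] by simp
  then show ?thesis unfolding T_def by blast
qed

lemma card_fibre_eq_card_kernel:
  assumes M: "subgroup M G" and f: "f \<in> hom (G\<lparr>carrier := M\<rparr>) G" and x: "x \<in> M"
  shows "card {y \<in> M. f y = f x} = card {y \<in> M. f y = \<one>}"
proof -
  have Mc: "u \<in> carrier G" if "u \<in> M" for u using subgroup.mem_carrier[OF M that] .
  have fc: "f u \<in> carrier G" if "u \<in> M" for u using hom_in_carrier[OF f] that by simp
  have fmult: "f (u \<otimes> v) = f u \<otimes> f v" if "u \<in> M" "v \<in> M" for u v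
    using hom_mult[OF f] that by simp
  have finv: "f (inv x \<otimes> y) = \<one>" if "y \<in> M" "f y = f x" for y
  proof -
    have "f (inv x) \<otimes> f x = f (inv x \<otimes> x)" using fmult M x by (simp add: subgroup.m_inv_closed)
    then have "f (inv x) \<otimes> f x = \<one>"
      using fmult[of \<one> \<one>] fc M x Mc by (simp add: subgroup.one_closed)
    then show ?thesis using fmult[of "inv x" y] that M x fc by (simp add: subgroup.m_inv_closed)
  qed
  have "bij_betw (\<lambda>k. x \<otimes> k) {y \<in> M. f y = \<one>} {y \<in> M. f y = f x}"
  proof (rule bij_betw_byWitness[where f' = "\<lambda>y. inv x \<otimes> y"])
    show "\<forall>k \<in> {y \<in> M. f y = \<one>}. inv x \<otimes> (x \<otimes> k) = k" using x Mc by auto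
    show "\<forall>y \<in> {y \<in> M. f y = f x}. x \<otimes> (inv x \<otimes> y) = y" using x Mc by auto
    show "(\<lambda>k. x \<otimes> k) ` {y \<in> M. f y = \<one>} \<subseteq> {y \<in> M. f y = f x}"
      using x M fmult fc by (auto simp: subgroup.m_closed)
    show "(\<lambda>y. inv x \<otimes> y) ` {y \<in> M. f y = f x} \<subseteq> {y \<in> M. f y = \<one>}"
      using x M finv by (auto simp: subgroup.m_closed subgroup.m_inv_closed)
  qed
  then show ?thesis by (simp add: bij_betw_same_card)
qed

lemma card_kernel_mult_card_image:
  assumes "subgroup M G" "finite M" "f \<in> hom (G\<lparr>carrier := M\<rparr>) G"
  shows "card M = card (f ` M) * card {x \<in> M. f x = \<one>}"
  by (rule card_eq_card_image_mult) (use assms card_fibre_eq_card_kernel in auto)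

lemma card_le_card_image_mult_card_kernel:
  assumes "subgroup M G" "finite M" "f \<in> hom (G\<lparr>carrier := M\<rparr>) G" "N \<subseteq> M"
  shows "card N \<le> card (f ` N) * card {x \<in> M. f x = \<one>}"
proof (rule card_le_card_image_mult)
  show "finite N" using assms(2,4) finite_subset by blast
  fix y assume "y \<in> f ` N"
  then obtain x where x: "x \<in> N" "y = f x" by blast
  have "card {x \<in> N. f x = y} \<le> card {x' \<in> M. f x' = f x}"
    using x assms(2,4) by (intro card_mono) auto
  also have "\<dots> = card {x \<in> M. f x = \<one>}"
    using card_fibre_eq_card_kernel[OF assms(1,3)] x assms(4) by blast
  finally show "card {x \<in> N. f x = y} \<le> card {x \<in> M. f x = \<one>}" .
qed

end

definition endo_minus_one :: "('a, 'b) monoid_scheme \<Rightarrow> ('a \<Rightarrow> 'a) \<Rightarrow> 'a \<Rightarrow> 'a" where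
  "endo_minus_one G \<phi> u = \<phi> u \<otimes>\<^bsub>G\<^esub> inv\<^bsub>G\<^esub> u"

context comm_group begin

lemma mult_inv_cancel_middle: "x \<in> carrier G \<Longrightarrow> y \<in> carrier G \<Longrightarrow> x \<otimes> (y \<otimes> inv x) = y"
  by (metis inv_closed m_lcomm r_inv r_one)

lemma inv_mult_cancel_middle: "x \<in> carrier G \<Longrightarrow> y \<in> carrier G \<Longrightarrow> inv x \<otimes> (y \<otimes> x) = y"
  by (metis inv_closed m_lcomm l_inv r_one)

text \<open>In additive notation: \<open>(\<alpha> - 1)(\<beta> - 1)(\<alpha>\<beta> - 1)(\<alpha>\<beta>\<^sup>2 - 1) = 0\<close> for commuting endomorphisms
  with \<open>\<alpha>\<^sup>3 = \<beta>\<^sup>3 = 1\<close>, an identity in the group ring of \<open>C\<^sub>3 \<times> C\<^sub>3\<close>.\<close>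
lemma endo_minus_one_product_order_three:
  assumes \<alpha>: "\<alpha> \<in> hom G G" and \<beta>: "\<beta> \<in> hom G G"
    and comm: "\<And>x. x \<in> carrier G \<Longrightarrow> \<alpha> (\<beta> x) = \<beta> (\<alpha> x)"
    and cube: "\<And>x. x \<in> carrier G \<Longrightarrow> \<alpha> (\<alpha> (\<alpha> x)) = x" "\<And>x. x \<in> carrier G \<Longrightarrow> \<beta> (\<beta> (\<beta> x)) = x"
    and x: "x \<in> carrier G"
  shows "endo_minus_one G \<alpha> (endo_minus_one G \<beta> (endo_minus_one G (\<alpha> \<circ> \<beta>)
           (endo_minus_one G (\<alpha> \<circ> \<beta> \<circ> \<beta>) x))) = \<one>"
proof -
  interpret \<alpha>: group_hom G G \<alpha> using \<alpha> by unfold_locales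
  interpret \<beta>: group_hom G G \<beta> using \<beta> by unfold_locales
  have cl: "\<alpha> u \<in> carrier G" "\<beta> u \<in> carrier G" if "u \<in> carrier G" for u using that by simp_all
  note hom = \<alpha>.hom_mult \<beta>.hom_mult
  note inv_hom = \<alpha>.hom_inv \<beta>.hom_inv
  txt \<open>Additively, \<open>y = (\<alpha>\<beta> - 1)(\<alpha>\<beta>\<^sup>2 - 1) x = N - W\<close> with \<open>N = (1 + \<alpha> + \<alpha>\<^sup>2) x\<close> fixed by \<open>\<alpha>\<close>
    and \<open>W = \<alpha> (1 + \<beta> + \<beta>\<^sup>2) x\<close> fixed by \<open>\<beta>\<close>; so \<open>(\<beta> - 1) y = (\<beta> - 1) N\<close>, which \<open>\<alpha> - 1\<close> kills.\<close>
  define N where "N = x \<otimes> \<alpha> x \<otimes> \<alpha> (\<alpha> x)"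
  define W where "W = \<alpha> x \<otimes> \<alpha> (\<beta> x) \<otimes> \<alpha> (\<beta> (\<beta> x))"
  define y where "y = endo_minus_one G (\<alpha> \<circ> \<beta>) (endo_minus_one G (\<alpha> \<circ> \<beta> \<circ> \<beta>) x)"
  have C: "a \<in> carrier G" if "a \<in> {x, \<alpha> x, \<beta> x, \<alpha> (\<alpha> x), \<alpha> (\<beta> x), \<beta> (\<beta> x), \<alpha> (\<beta> (\<beta> x))}" for a
    using that x cl by auto
  have Wc: "W \<in> carrier G" and Nc: "N \<in> carrier G" unfolding W_def N_def using x cl by auto
  have "\<alpha> (\<beta> (\<alpha> (\<beta> (\<beta> x)))) = \<alpha> (\<alpha> x)"
    using comm cube x cl by metis
  then have "y = \<alpha> (\<alpha> x) \<otimes> inv (\<alpha> (\<beta> x)) \<otimes> inv (\<alpha> (\<beta> (\<beta> x))) \<otimes> x"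
    unfolding y_def endo_minus_one_def using x cl hom inv_hom by (simp add: inv_mult m_ac)
  then have "y \<otimes> W = N" unfolding W_def N_def using C by (simp add: m_ac inv_mult)
  then have yN: "y = N \<otimes> inv W" using Wc Nc x cl unfolding y_def endo_minus_one_def
    by (metis inv_solve_right comp_apply inv_closed m_closed)
  have \<beta>W: "\<beta> W = W" and \<alpha>N: "\<alpha> N = N"
    unfolding W_def N_def using x cl hom comm cube by (simp_all add: m_ac)
  have "endo_minus_one G \<beta> y = \<beta> N \<otimes> inv N" unfolding yN endo_minus_one_def
    using Wc Nc cl inv_hom hom \<beta>W by (simp add: inv_mult m_ac mult_inv_cancel_middle inv_mult_cancel_middle)
  moreover have "endo_minus_one G \<alpha> (\<beta> N \<otimes> inv N) = \<one>" unfolding endo_minus_one_def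
    using Nc cl hom inv_hom \<alpha>N comm[OF Nc]
    by (simp add: inv_mult m_ac mult_inv_cancel_middle inv_mult_cancel_middle)
  ultimately show ?thesis unfolding y_def[symmetric] by simp
qed

end

lemma (in monoid) nat_pow_three: "x \<in> carrier G \<Longrightarrow> x [^] (3::nat) = x \<otimes> x \<otimes> x"
  by (simp add: numeral_3_eq_3)

locale abelian_by_abelian = group G for G (structure) +
  fixes M
  assumes normal_subgroup: "M \<lhd> G"
    and abelian: "x \<in> M \<Longrightarrow> y \<in> M \<Longrightarrow> x \<otimes> y = y \<otimes> x"
    and commutator_mem: "x \<in> carrier G \<Longrightarrow> y \<in> carrier G \<Longrightarrow> commutator G x y \<in> M"
begin

lemma subgroup_M: "subgroup M G"
  by (rule normal_imp_subgroup[OF normal_subgroup])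

lemma mem_carrier: "x \<in> M \<Longrightarrow> x \<in> carrier G"
  by (rule subgroup.mem_carrier[OF subgroup_M])

lemma conj_mem: "g \<in> carrier G \<Longrightarrow> m \<in> M \<Longrightarrow> g \<otimes> m \<otimes> inv g \<in> M"
  by (rule normal.inv_op_closed2[OF normal_subgroup])

lemma commutator_mult_right:
  assumes e: "e \<in> carrier G" and x: "x \<in> M" and y: "y \<in> M"
  shows "commutator G e (x \<otimes> y) = commutator G e x \<otimes> commutator G e y"
proof -
  have conj: "e \<otimes> x \<otimes> inv e \<in> M" "e \<otimes> y \<otimes> inv e \<in> M" using conj_mem e x y by auto
  have "commutator G e (x \<otimes> y) = (e \<otimes> x \<otimes> inv e) \<otimes> ((e \<otimes> y \<otimes> inv e) \<otimes> (inv y \<otimes> inv x))"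
    using e x y mem_carrier by (simp add: commutator_def m_assoc inv_mult_group)
  also have "\<dots> = (e \<otimes> x \<otimes> inv e) \<otimes> (inv x \<otimes> ((e \<otimes> y \<otimes> inv e) \<otimes> inv y))"
  proof -
    have "(e \<otimes> y \<otimes> inv e) \<otimes> inv y \<in> M" "inv x \<in> M"
      using conj x y subgroup_M by (auto intro: subgroup.m_closed subgroup.m_inv_closed)
    from abelian[OF this] show ?thesis using conj x y mem_carrier by (simp add: m_assoc)
  qed
  also have "\<dots> = commutator G e x \<otimes> commutator G e y"
    using e x y mem_carrier by (simp add: commutator_def m_assoc)
  finally show ?thesis .
qed

lemma commutator_hom: "e \<in> carrier G \<Longrightarrow> commutator G e \<in> hom (G\<lparr>carrier := M\<rparr>) G"
  by (rule homI) (simp_all add: mem_carrier commutator_mult_right)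

lemma group_hom_commutator: "e \<in> carrier G \<Longrightarrow> group_hom (G\<lparr>carrier := M\<rparr>) G (commutator G e)"
  unfolding group_hom_def group_hom_axioms_def
  using subgroup_imp_group[OF subgroup_M] is_group commutator_hom by blast

text \<open>Conjugating \<open>e\<close> multiplies it by an element of \<open>M\<close>, which \<open>[-, M]\<close> does not see as \<open>M\<close> is abelian.\<close>
lemma conj_commutator_right:
  assumes g: "g \<in> carrier G" and e: "e \<in> carrier G" and m: "m \<in> M"
  shows "g \<otimes> commutator G e m \<otimes> inv g = commutator G e (g \<otimes> m \<otimes> inv g)"
proof -
  define c where "c = commutator G (inv e) g"
  define m' where "m' = g \<otimes> m \<otimes> inv g"
  have c: "c \<in> M" and m': "m' \<in> M" unfolding c_def m'_def using commutator_mem conj_mem g e m by auto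
  have "g \<otimes> e \<otimes> inv g = e \<otimes> c" unfolding c_def using g e by (simp add: commutator_def m_assoc)
  then have "g \<otimes> commutator G e m \<otimes> inv g = commutator G (e \<otimes> c) m'"
    unfolding m'_def using g e m mem_carrier by (simp add: commutator_conj)
  also have "\<dots> = e \<otimes> commutator G c m' \<otimes> inv e \<otimes> commutator G e m'"
    using e c m' mem_carrier by (simp add: commutator_mult_left)
  also have "\<dots> = commutator G e m'"
    using e c m' mem_carrier abelian[OF c m'] commutator_eq_one_iff[of c m'] by (simp add: m_assoc)
  finally show ?thesis unfolding m'_def .
qed

lemma commutator_image_normal: "e \<in> carrier G \<Longrightarrow> commutator G e ` M \<lhd> G"
proof (rule normal_inv_iff[THEN iffD2], intro conjI ballI)
  assume e: "e \<in> carrier G"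
  interpret group_hom "G\<lparr>carrier := M\<rparr>" G "commutator G e"
    using group_hom_commutator[OF e] .
  show "subgroup (commutator G e ` M) G" using img_is_subgroup by simp
  fix g k assume "g \<in> carrier G" "k \<in> commutator G e ` M"
  then show "g \<otimes> k \<otimes> inv g \<in> commutator G e ` M" using e conj_commutator_right conj_mem by auto
qed

lemma derived_generate_subset_commutator_image:
  assumes e: "e \<in> carrier G"
  shows "derived G (generate G (insert e M)) \<subseteq> commutator G e ` M"
proof (rule derived_generate_subset[OF commutator_image_normal[OF e]])
  show "insert e M \<subseteq> carrier G" using e mem_carrier by blast
  have "commutator G e \<one> = \<one>" using e by (simp add: commutator_def)
  then have one: "\<one> \<in> commutator G e ` M" using subgroup.one_closed[OF subgroup_M] by (metis imageI)
  have "commutator G m e \<in> commutator G e ` M" if m: "m \<in> M" for m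
  proof -
    have "commutator G m e = commutator G e (inv m)"
      using group_hom.hom_inv[OF group_hom_commutator[OF e], of m] m m_inv_consistent[OF subgroup_M m]
        inv_commutator e mem_carrier by simp
    then show ?thesis using m subgroup.m_inv_closed[OF subgroup_M] by simp
  qed
  moreover have "commutator G g h = \<one>" if "g \<in> M" "h \<in> M" for g h
    using that abelian mem_carrier by (simp add: commutator_eq_one_iff)
  moreover have "commutator G e e = \<one>" using e by (simp add: commutator_eq_one_iff)
  ultimately show "commutator G g h \<in> commutator G e ` M" if "g \<in> insert e M" "h \<in> insert e M" for g h
    using that one by auto
qed

lemma card_generate_mult_card_kernel_le:
  assumes fin: "finite (carrier G)" and e: "e \<in> carrier G"
  defines "H \<equiv> generate G (insert e M)"
  shows "card H * card {x \<in> M. commutator G e x = \<one>}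
           \<le> card (carrier (abelianization G H)) * card M"
proof -
  have gens: "insert e M \<subseteq> carrier G" using e mem_carrier by blast
  have H_sub: "H \<subseteq> carrier G" unfolding H_def using generate_incl[OF gens] .
  have H: "subgroup H G" unfolding H_def using generate_is_subgroup[OF gens] .
  interpret H: group "G\<lparr>carrier := H\<rparr>" using subgroup_imp_group[OF H] .
  have "subgroup (derived G H) (G\<lparr>carrier := H\<rparr>)"
    using subgroup_incl[OF derived_is_subgroup[OF H_sub] H derived_incl[OF _ H]] by simp
  from H.lagrange[OF this]
  have lagrange: "card (carrier (abelianization G H)) * card (derived G H) = card H"
    unfolding abelianization_def order_def by (simp add: FactGroup_def)
  have finM: "finite M" using finite_subset[OF subgroup.subset[OF subgroup_M] fin] .
  have "card H * card {x \<in> M. commutator G e x = \<one>}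
      = card (carrier (abelianization G H)) * (card (derived G H) * card {x \<in> M. commutator G e x = \<one>})"
    by (simp flip: lagrange)
  also have "\<dots> \<le> card (carrier (abelianization G H))
                   * (card (commutator G e ` M) * card {x \<in> M. commutator G e x = \<one>})"
    using derived_generate_subset_commutator_image[OF e] finM unfolding H_def
    by (intro mult_le_mono2 mult_le_mono1 card_mono) auto
  also have "\<dots> = card (carrier (abelianization G H)) * card M"
    using card_kernel_mult_card_image[OF subgroup_M finM commutator_hom[OF e]] by simp
  finally show ?thesis .
qed

lemma conj_hom: "g \<in> carrier G \<Longrightarrow> (\<lambda>u. g \<otimes> u \<otimes> inv g) \<in> hom (G\<lparr>carrier := M\<rparr>) (G\<lparr>carrier := M\<rparr>)"
  using conj_mem mem_carrier by (intro homI) (simp_all add: m_assoc)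

lemma conj_conj_commute:
  assumes a: "a \<in> carrier G" and b: "b \<in> carrier G" and u: "u \<in> M"
  shows "a \<otimes> (b \<otimes> u \<otimes> inv b) \<otimes> inv a = b \<otimes> (a \<otimes> u \<otimes> inv a) \<otimes> inv b"
proof -
  define c where "c = commutator G a b"
  define v where "v = b \<otimes> a \<otimes> u \<otimes> inv (b \<otimes> a)"
  have c: "c \<in> M" and v: "v \<in> M" unfolding c_def v_def using commutator_mem conj_mem a b u by auto
  have ab: "a \<otimes> b = c \<otimes> (b \<otimes> a)" unfolding c_def commutator_def using a b by (simp add: m_assoc)
  have "a \<otimes> (b \<otimes> u \<otimes> inv b) \<otimes> inv a = a \<otimes> b \<otimes> u \<otimes> inv (a \<otimes> b)"
    using a b u mem_carrier by (simp add: m_assoc inv_mult_group)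
  also have "\<dots> = c \<otimes> v \<otimes> inv c"
    unfolding ab v_def using a b c u mem_carrier by (simp add: m_assoc inv_mult_group)
  also have "\<dots> = v" using abelian[OF c v] c v mem_carrier by (simp add: m_assoc)
  also have "\<dots> = b \<otimes> (a \<otimes> u \<otimes> inv a) \<otimes> inv b"
    unfolding v_def using a b u mem_carrier by (simp add: m_assoc inv_mult_group)
  finally show ?thesis .
qed

lemma conj_three_times:
  assumes g: "g \<in> carrier G" "g [^] (3::nat) \<in> M" and u: "u \<in> M"
  shows "g \<otimes> (g \<otimes> (g \<otimes> u \<otimes> inv g) \<otimes> inv g) \<otimes> inv g = u"
proof -
  have "g \<otimes> (g \<otimes> (g \<otimes> u \<otimes> inv g) \<otimes> inv g) \<otimes> inv g = g [^] (3::nat) \<otimes> u \<otimes> inv (g [^] (3::nat))"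
    using g u mem_carrier by (simp add: nat_pow_three m_assoc inv_mult_group)
  also have "\<dots> = u" using abelian[OF g(2) u] g u mem_carrier by (simp add: m_assoc)
  finally show ?thesis .
qed

text \<open>Conjugations by \<open>a\<close> and \<open>b\<close> restrict to commuting automorphisms of order dividing 3 of the
  abelian group \<open>M\<close>, and \<open>[g, u] = (g u g\<inverse>) u\<inverse>\<close>.\<close>
lemma commutator_four_fold_eq_one:
  assumes a: "a \<in> carrier G" "a [^] (3::nat) \<in> M" and b: "b \<in> carrier G" "b [^] (3::nat) \<in> M"
    and x: "x \<in> M"
  shows "commutator G a (commutator G b (commutator G (a \<otimes> b) (commutator G (a \<otimes> b \<otimes> b) x))) = \<one>"
proof -
  let ?M = "G\<lparr>carrier := M\<rparr>"
  interpret M: comm_group ?M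
    using group.group_comm_groupI[OF subgroup_imp_group[OF subgroup_M]] abelian by simp
  define conj where "conj g u = g \<otimes> u \<otimes> inv g" for g u
  have conj_mult: "conj (g \<otimes> h) u = conj g (conj h u)" if "g \<in> carrier G" "h \<in> carrier G" "u \<in> M" for g h u
    using that mem_carrier unfolding conj_def by (simp add: m_assoc inv_mult_group)
  have step: "commutator G g u = endo_minus_one ?M \<phi> u" if "u \<in> M" "\<phi> u = conj g u" for g \<phi> u
    using that m_inv_consistent[OF subgroup_M] unfolding endo_minus_one_def conj_def commutator_def by simp
  define z4 where "z4 = commutator G (a \<otimes> b \<otimes> b) x"
  define z3 where "z3 = commutator G (a \<otimes> b) z4"
  define z2 where "z2 = commutator G b z3"
  have z: "z4 \<in> M" "z3 \<in> M" "z2 \<in> M"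
    unfolding z4_def z3_def z2_def using a b x commutator_mem mem_carrier by simp_all
  have conj_in: "conj g u \<in> M" if "g \<in> carrier G" "u \<in> M" for g u
    using that conj_mem unfolding conj_def by simp
  have "z4 = endo_minus_one ?M (conj a \<circ> conj b \<circ> conj b) x"
    unfolding z4_def using a b x conj_in by (intro step) (simp_all add: conj_mult)
  moreover have "z3 = endo_minus_one ?M (conj a \<circ> conj b) z4"
    unfolding z3_def using a b z conj_in by (intro step) (simp_all add: conj_mult)
  moreover have "z2 = endo_minus_one ?M (conj b) z3"
    unfolding z2_def using z by (intro step) simp_all
  moreover have "commutator G a z2 = endo_minus_one ?M (conj a) z2"
    using z by (intro step) simp_all
  moreover have "endo_minus_one ?M (conj a) (endo_minus_one ?M (conj b) (endo_minus_one ?M (conj a \<circ> conj b)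
           (endo_minus_one ?M (conj a \<circ> conj b \<circ> conj b) x))) = \<one>\<^bsub>?M\<^esub>"
    using M.endo_minus_one_product_order_three[OF conj_hom[OF a(1)] conj_hom[OF b(1)]]
      conj_conj_commute conj_three_times a b x unfolding conj_def by simp
  ultimately show ?thesis unfolding z4_def z3_def z2_def by simp
qed

lemma card_le_prod_card_commutator_kernels:
  assumes fin: "finite M"
    and a: "a \<in> carrier G" "a [^] (3::nat) \<in> M" and b: "b \<in> carrier G" "b [^] (3::nat) \<in> M"
  shows "card M \<le> card {x \<in> M. commutator G a x = \<one>} * card {x \<in> M. commutator G b x = \<one>}
                   * card {x \<in> M. commutator G (a \<otimes> b) x = \<one>}
                   * card {x \<in> M. commutator G (a \<otimes> b \<otimes> b) x = \<one>}"
proof -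
  let ?k = "\<lambda>g. card {x \<in> M. commutator G g x = \<one>}"
  have image_sub: "commutator G g ` N \<subseteq> M" if "g \<in> carrier G" "N \<subseteq> M" for g N
    using that commutator_mem mem_carrier by blast
  have bound: "card N \<le> card (commutator G g ` N) * ?k g" if "g \<in> carrier G" "N \<subseteq> M" for g N
    using card_le_card_image_mult_card_kernel[OF subgroup_M fin commutator_hom] that .
  define N4 where "N4 = commutator G (a \<otimes> b \<otimes> b) ` M"
  define N3 where "N3 = commutator G (a \<otimes> b) ` N4"
  define N2 where "N2 = commutator G b ` N3"
  have N: "N4 \<subseteq> M" "N3 \<subseteq> M" "N2 \<subseteq> M"
    unfolding N4_def N3_def N2_def using a b image_sub by simp_all
  have "commutator G a ` N2 \<subseteq> {\<one>}"
    unfolding N2_def N3_def N4_def using commutator_four_fold_eq_one[OF a b] by blast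
  then have "card (commutator G a ` N2) \<le> 1"
    using card_mono[of "{\<one>}"] by simp
  have "card M \<le> card N4 * ?k (a \<otimes> b \<otimes> b)"
    unfolding N4_def using a b by (intro bound) auto
  also have "\<dots> \<le> card N3 * ?k (a \<otimes> b) * ?k (a \<otimes> b \<otimes> b)"
    unfolding N3_def using a b N bound[of "a \<otimes> b" N4] by simp
  also have "\<dots> \<le> card N2 * ?k b * ?k (a \<otimes> b) * ?k (a \<otimes> b \<otimes> b)"
    unfolding N2_def using b N bound[of b N3] by simp
  also have "\<dots> \<le> card (commutator G a ` N2) * ?k a * ?k b * ?k (a \<otimes> b) * ?k (a \<otimes> b \<otimes> b)"
    using a N bound[of a N2] by simp
  also have "\<dots> \<le> ?k a * ?k b * ?k (a \<otimes> b) * ?k (a \<otimes> b \<otimes> b)"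
    using \<open>card (commutator G a ` N2) \<le> 1\<close> by simp
  finally show ?thesis .
qed

end

lemma metabelian_imp_abelian_by_abelian:
  assumes G: "group G" and met: "metabelian G"
  shows "abelian_by_abelian G (derived G (carrier G))"
proof -
  interpret group G by (rule G)
  have "x \<otimes>\<^bsub>G\<^esub> y = y \<otimes>\<^bsub>G\<^esub> x" if "x \<in> derived G (carrier G)" "y \<in> derived G (carrier G)" for x y
  proof -
    have "commutator G x y = \<one>\<^bsub>G\<^esub>"
      using commutator_mem_derived[OF that] met unfolding metabelian_def by simp
    then show ?thesis using that derived_in_carrier[of "carrier G"] commutator_eq_one_iff by blast
  qed
  then show ?thesis
    unfolding abelian_by_abelian_def abelian_by_abelian_axioms_def
    using G derived_self_is_normal commutator_mem_derived by blast
qed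

lemma product_group_cong:
  "(\<And>i. i \<in> I \<Longrightarrow> G i = H i) \<Longrightarrow> product_group I G = product_group I H"
  unfolding product_group_def by (simp cong: PiE_cong restrict_cong)

lemma cyc_prod_1_1: "cyc_prod 3 {#1, 1#} = product_group {..<2} (\<lambda>i. integer_mod_group 3)"
proof -
  have "sorted_list_of_multiset {#1::nat, 1#} = [1, 1]" "size {#1::nat, 1#} = 2" by simp_all
  then show ?thesis unfolding cyc_prod_def
    by (simp only:) (rule product_group_cong, auto simp: less_2_cases_iff)
qed

lemma carrier_cyc_prod_1_1: "carrier (cyc_prod 3 {#1, 1#}) = (\<Pi>\<^sub>E i\<in>{..<2}. {0..<3})"
  unfolding cyc_prod_1_1 by (simp add: carrier_integer_mod_group)

lemma card_cyc_prod_1_1: "card (carrier (cyc_prod 3 {#1, 1#})) = 9"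
  unfolding carrier_cyc_prod_1_1 by (simp add: card_PiE)

lemma group_cyc_prod: "group (cyc_prod p t)"
  unfolding cyc_prod_def by (rule product_group) simp

lemma cyc_prod_1_1_cube:
  assumes y: "y \<in> carrier (cyc_prod 3 {#1, 1#})"
  shows "y [^]\<^bsub>cyc_prod 3 {#1, 1#}\<^esub> (3::nat) = \<one>\<^bsub>cyc_prod 3 {#1, 1#}\<^esub>"
proof -
  let ?P = "product_group {..<2::nat} (\<lambda>i. integer_mod_group 3)"
  interpret group "cyc_prod 3 {#1, 1#}" by (rule group_cyc_prod)
  have "y [^]\<^bsub>cyc_prod 3 {#1, 1#}\<^esub> (3::nat) = y \<otimes>\<^bsub>?P\<^esub> y \<otimes>\<^bsub>?P\<^esub> y"
    using nat_pow_three[OF y] by (simp only: cyc_prod_1_1)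
  also have "\<dots> = (\<lambda>i\<in>{..<2}. ((y i + y i) mod 3 + y i) mod 3)"
    by (simp only: mult_product_group mult_integer_mod_group of_nat_numeral) (rule restrict_ext, simp)
  also have "\<dots> = (\<lambda>i\<in>{..<2}. 0)"
  proof (rule restrict_ext)
    fix i
    have "((y i + y i) mod 3 + y i) mod 3 = (3 * y i) mod (3::int)" by (simp add: mod_add_left_eq)
    then show "((y i + y i) mod 3 + y i) mod 3 = 0" by simp
  qed
  also have "\<dots> = \<one>\<^bsub>cyc_prod 3 {#1, 1#}\<^esub>"
    by (simp only: cyc_prod_1_1 one_product_group one_integer_mod_group)
  finally show ?thesis .
qed

lemma (in normal) pow_mem_of_iso_exponent:
  fixes n :: nat
  assumes \<phi>: "\<phi> \<in> iso (G Mod H) A" and A: "group A"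
    and exp: "\<And>y. y \<in> carrier A \<Longrightarrow> y [^]\<^bsub>A\<^esub> n = \<one>\<^bsub>A\<^esub>" and g: "g \<in> carrier G"
  shows "g [^] n \<in> H"
proof -
  interpret Q: group "G Mod H" by (rule factorgroup_is_group)
  have X: "H #> g \<in> carrier (G Mod H)" using g by (simp add: FactGroup_def rcosetsI subset)
  have hom: "\<phi> \<in> hom (G Mod H) A" using \<phi> unfolding iso_def by simp
  have "\<phi> ((H #> g) [^]\<^bsub>G Mod H\<^esub> n) = \<phi> (H #> g) [^]\<^bsub>A\<^esub> n"
    using hom_nat_pow[OF hom X Q.is_group A] .
  also have "\<dots> = \<phi> \<one>\<^bsub>G Mod H\<^esub>"
    using exp[OF hom_in_carrier[OF hom X]] hom_one[OF hom Q.is_group A] by simp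
  finally have "\<phi> ((H #> g) [^]\<^bsub>G Mod H\<^esub> n) = \<phi> \<one>\<^bsub>G Mod H\<^esub>" .
  moreover have "inj_on \<phi> (carrier (G Mod H))" using \<phi> unfolding iso_def bij_betw_def by simp
  ultimately have "(H #> g) [^]\<^bsub>G Mod H\<^esub> n = \<one>\<^bsub>G Mod H\<^esub>"
    using Q.nat_pow_closed[OF X] Q.one_closed by (auto dest: inj_onD)
  then have "H #> (g [^] n) = H" using FactGroup_pow[OF g] by simp
  then show ?thesis using rcos_self[OF nat_pow_closed[OF g, of n] subgroup_axioms] by simp
qed

locale Cnt_member = abelian_by_abelian G M for G (structure) and M +
  fixes \<tau> :: "nat \<Rightarrow> nat multiset" and \<sigma> :: "nat \<Rightarrow> 'a set"
  assumes derived_eq: "M = derived G (carrier G)"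
    and finite_carrier: "finite (carrier G)"
    and quotient_of_type_1_1: "has_abelian_type 3 (G Mod M) {#1, 1#}"
    and layer_bij: "bij_betw \<sigma> {..<4} (Lyr 3 1 G)"
    and layer_type: "i < 4 \<Longrightarrow> has_abelian_type 3 (abelianization G (\<sigma> i)) (\<tau> i)"

lemma Cnt_cond_imp_Cnt_member:
  assumes "Cnt_cond 3 \<tau> G"
  shows "\<exists>\<sigma>. Cnt_member G (derived G (carrier G)) \<tau> \<sigma>"
proof -
  from assms obtain \<sigma> where G: "group G" "metabelian G" and fin: "finite (carrier G)"
    and ab: "has_abelian_type 3 (abelianization G (carrier G)) {#1, 1#}"
    and \<sigma>: "bij_betw \<sigma> {..<4} (Lyr 3 1 G)"
    and types: "\<And>i. i < 4 \<Longrightarrow> has_abelian_type 3 (abelianization G (\<sigma> i)) (\<tau> i)"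
    unfolding Cnt_cond_def by auto
  have "Cnt_member G (derived G (carrier G)) \<tau> \<sigma>"
    unfolding Cnt_member_def Cnt_member_axioms_def
    using metabelian_imp_abelian_by_abelian[OF G] fin ab \<sigma> types
    by (simp add: abelianization_def)
  then show ?thesis by blast
qed

context Cnt_member begin

lemma finite_M: "finite M"
  using finite_subset[OF subgroup.subset[OF subgroup_M] finite_carrier] .

lemma card_M_pos: "card M > 0"
  using finite_M subgroup.one_closed[OF subgroup_M] card_gt_0_iff by blast

lemma card_carrier: "card (carrier G) = 9 * card M"
proof -
  have "card (carrier (G Mod M)) = 9"
    using quotient_of_type_1_1 iso_same_card card_cyc_prod_1_1 unfolding has_abelian_type_def by metis
  then show ?thesis
    using lagrange[OF subgroup_M] unfolding order_def by (simp add: FactGroup_def)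
qed

lemma cube_mem: "g \<in> carrier G \<Longrightarrow> g [^] (3::nat) \<in> M"
  using quotient_of_type_1_1 normal.pow_mem_of_iso_exponent[OF normal_subgroup _ group_cyc_prod cyc_prod_1_1_cube]
  unfolding has_abelian_type_def is_iso_def by blast

lemma layer_mem: "i < 4 \<Longrightarrow> \<sigma> i \<in> Lyr 3 1 G"
  using layer_bij bij_betwE by blast

lemma subgroup_layer: "i < 4 \<Longrightarrow> subgroup (\<sigma> i) G"
  using layer_mem unfolding Lyr_def by blast

lemma M_subset_layer: "i < 4 \<Longrightarrow> M \<subseteq> \<sigma> i"
  using layer_mem unfolding Lyr_def derived_eq by blast

lemma finite_layer: "i < 4 \<Longrightarrow> finite (\<sigma> i)"
  using finite_subset[OF subgroup.subset[OF subgroup_layer] finite_carrier] .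

lemma card_layer: "i < 4 \<Longrightarrow> card (\<sigma> i) = 3 * card M"
  using lagrange[OF subgroup_layer] layer_mem card_carrier unfolding order_def Lyr_def by simp

lemma layer_eq_generate:
  assumes i: "i < 4" and e: "e \<in> \<sigma> i" "e \<notin> M"
  shows "\<sigma> i = generate G (insert e M)"
proof
  have gens: "insert e M \<subseteq> carrier G"
    using e subgroup.subset[OF subgroup_layer[OF i]] mem_carrier by blast
  show "generate G (insert e M) \<subseteq> \<sigma> i"
    using e M_subset_layer[OF i] subgroup_layer[OF i] by (intro generate_subgroup_incl) auto
  have "Factorial_Ring.prime (3::nat)" by simp
  then show "\<sigma> i \<subseteq> generate G (insert e M)"
    using subgroup_prime_index_subset[OF subgroup_M subgroup_layer[OF i] finite_layer[OF i]
        M_subset_layer[OF i] _ card_layer[OF i] e generate_is_subgroup[OF gens]]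
      generate.incl[of _ "insert e M" G] by blast
qed

lemma layer_inter:
  assumes "i < 4" "j < 4" "i \<noteq> j"
  shows "\<sigma> i \<inter> \<sigma> j = M"
proof (rule ccontr)
  assume "\<sigma> i \<inter> \<sigma> j \<noteq> M"
  then obtain e where "e \<in> \<sigma> i" "e \<in> \<sigma> j" "e \<notin> M" using assms M_subset_layer by blast
  then have "\<sigma> i = \<sigma> j" using assms layer_eq_generate by metis
  then show False using assms layer_bij unfolding bij_betw_def inj_on_def by blast
qed

text \<open>The four layers pairwise meet in \<open>M\<close>, so they cover \<open>1 + 4 \<cdot> 2 = 9\<close> cosets of \<open>M\<close>.\<close>
lemma layer_cover:
  assumes g: "g \<in> carrier G"
  shows "\<exists>i<4. g \<in> \<sigma> i"
proof -
  define U where "U = M \<union> (\<Union>i<4. \<sigma> i - M)"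
  have "card (\<Union>i<4. \<sigma> i - M) = (\<Sum>i<4. card (\<sigma> i - M))"
    using finite_layer layer_inter by (intro card_UN_disjoint) auto
  also have "\<dots> = 8 * card M"
    using card_Diff_subset[OF finite_M M_subset_layer] card_layer by simp
  finally have "card U = card (carrier G)"
    unfolding U_def card_carrier using finite_M finite_layer by (subst card_Un_disjoint) auto
  moreover have "U \<subseteq> carrier G"
    unfolding U_def using mem_carrier subgroup.subset[OF subgroup_layer] by blast
  ultimately have "U = carrier G" using finite_carrier card_subset_eq by blast
  then have "g \<in> M \<or> (\<exists>i<4. g \<in> \<sigma> i)" using g unfolding U_def by blast
  then show ?thesis by (metis M_subset_layer subsetD zero_less_numeral)
qed

lemma card_commutator_kernel_le:
  assumes e: "e \<in> carrier G" "e \<notin> M"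
  shows "card {x \<in> M. commutator G e x = \<one>} \<le> (\<Sum>i<4. card (carrier (cyc_prod 3 (\<tau> i))))"
proof -
  obtain i where i: "i < 4" "e \<in> \<sigma> i" using layer_cover[OF e(1)] by blast
  have "3 * card M * card {x \<in> M. commutator G e x = \<one>} \<le> card (carrier (abelianization G (\<sigma> i))) * card M"
    using card_generate_mult_card_kernel_le[OF finite_carrier e(1)]
      layer_eq_generate[OF i e(2)] card_layer[OF i(1)] by simp
  then have "card {x \<in> M. commutator G e x = \<one>} \<le> card (carrier (abelianization G (\<sigma> i)))"
    using card_M_pos by simp
  also have "\<dots> = card (carrier (cyc_prod 3 (\<tau> i)))"
    using layer_type[OF i(1)] iso_same_card unfolding has_abelian_type_def by blast
  also have "\<dots> \<le> (\<Sum>i<4. card (carrier (cyc_prod 3 (\<tau> i))))"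
    using i(1) by (intro member_le_sum) auto
  finally show ?thesis .
qed

lemma exists_generators:
  obtains a b where "a \<in> carrier G" "b \<in> carrier G" "a \<notin> M" "b \<notin> M" "a \<otimes> b \<notin> M" "a \<otimes> b \<otimes> b \<notin> M"
proof -
  interpret S0: subgroup "\<sigma> 0" G using subgroup_layer by simp
  interpret S1: subgroup "\<sigma> 1" G using subgroup_layer by simp
  have "\<not> \<sigma> i \<subseteq> M" if "i < 4" for i
    using card_layer[OF that] card_mono[OF finite_M, of "\<sigma> i"] card_M_pos by linarith
  from this[of 0] this[of 1] obtain a b where a: "a \<in> \<sigma> 0" "a \<notin> M" and b: "b \<in> \<sigma> 1" "b \<notin> M"
    by auto
  have ac: "a \<in> carrier G" and bc: "b \<in> carrier G" using a b by simp_all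
  have in_M: "x \<in> M" if x: "x \<in> \<sigma> 1" and ax: "a \<otimes> x \<in> M" for x
  proof -
    have "a \<otimes> x \<in> \<sigma> 0" using ax M_subset_layer[of 0] by auto
    then have "inv a \<otimes> (a \<otimes> x) \<in> \<sigma> 0" using S0.m_closed S0.m_inv_closed a(1) by blast
    then have "x \<in> \<sigma> 0" using ac x by simp
    then show ?thesis using x layer_inter[of 0 1] by auto
  qed
  have "a \<otimes> b \<notin> M" using in_M b by blast
  moreover have "a \<otimes> b \<otimes> b \<notin> M"
  proof
    assume "a \<otimes> b \<otimes> b \<in> M"
    then have bb: "b \<otimes> b \<in> M" using in_M[of "b \<otimes> b"] S1.m_closed b ac bc by (simp add: m_assoc)
    have "inv (b \<otimes> b) \<otimes> b [^] (3::nat) \<in> M"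
      using bb cube_mem[OF bc] subgroup_M by (simp add: subgroup.m_closed subgroup.m_inv_closed)
    moreover have "inv (b \<otimes> b) \<otimes> b [^] (3::nat) = b"
      using bc by (simp only: nat_pow_three inv_mult_cancel_left m_closed)
    ultimately show False using b by simp
  qed
  ultimately show ?thesis using that a b ac bc by blast
qed

lemma card_carrier_le:
  "card (carrier G) \<le> 9 * (\<Sum>i<4. card (carrier (cyc_prod 3 (\<tau> i)))) ^ 4"
proof -
  let ?C = "\<Sum>i<4. card (carrier (cyc_prod 3 (\<tau> i)))"
  let ?k = "\<lambda>g. card {x \<in> M. commutator G g x = \<one>}"
  obtain a b where ab: "a \<in> carrier G" "b \<in> carrier G" "a \<notin> M" "b \<notin> M" "a \<otimes> b \<notin> M" "a \<otimes> b \<otimes> b \<notin> M"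
    by (rule exists_generators)
  have "card M \<le> ?k a * ?k b * ?k (a \<otimes> b) * ?k (a \<otimes> b \<otimes> b)"
    using card_le_prod_card_commutator_kernels[OF finite_M ab(1) cube_mem ab(2) cube_mem] ab by simp
  also have "\<dots> \<le> ?C * ?C * ?C * ?C"
    using ab by (intro mult_le_mono card_commutator_kernel_le) simp_all
  finally show ?thesis unfolding card_carrier by (simp add: power4_eq_xxxx mult.assoc)
qed

end

text \<open>The multiplication is set to \<open>0\<close> off \<open>{..<n}\<close>, so that only finitely many relabelled groups
  have at most \<open>N\<close> elements.\<close>
definition relabel :: "('a, 'b) monoid_scheme \<Rightarrow> nat monoid" where
  "relabel G = (let n = card (carrier G); f = (SOME f. bij_betw f {..<n} (carrier G)) in
     \<lparr>carrier = {..<n},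
      monoid.mult = (\<lambda>i j. if i < n \<and> j < n then inv_into {..<n} f (f i \<otimes>\<^bsub>G\<^esub> f j) else 0),
      one = inv_into {..<n} f \<one>\<^bsub>G\<^esub>\<rparr>)"

definition bounded_tables :: "nat \<Rightarrow> nat monoid set" where
  "bounded_tables N = (\<lambda>(n, m, e). \<lparr>carrier = {..<n}, monoid.mult = m, one = e\<rparr>) `
     ({..N} \<times> {m. \<forall>i j. m i j \<le> N \<and> (\<not> (i < N \<and> j < N) \<longrightarrow> m i j = 0)} \<times> {..N})"

lemma finite_bounded_tables: "finite (bounded_tables N)"
proof -
  let ?h = "\<lambda>t i j. if i < N \<and> j < N then t (i, j) else (0::nat)"
  have "{m :: nat \<Rightarrow> nat \<Rightarrow> nat. \<forall>i j. m i j \<le> N \<and> (\<not> (i < N \<and> j < N) \<longrightarrow> m i j = 0)}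
      \<subseteq> ?h ` (({..<N} \<times> {..<N}) \<rightarrow>\<^sub>E {..N})"
  proof
    fix m :: "nat \<Rightarrow> nat \<Rightarrow> nat"
    assume m: "m \<in> {m. \<forall>i j. m i j \<le> N \<and> (\<not> (i < N \<and> j < N) \<longrightarrow> m i j = 0)}"
    let ?t = "restrict (\<lambda>p. m (fst p) (snd p)) ({..<N} \<times> {..<N})"
    have "m = ?h ?t" using m by (auto simp: fun_eq_iff)
    moreover have "?t \<in> ({..<N} \<times> {..<N}) \<rightarrow>\<^sub>E {..N}" using m by auto
    ultimately show "m \<in> ?h ` (({..<N} \<times> {..<N}) \<rightarrow>\<^sub>E {..N})" by blast
  qed
  moreover have "finite (?h ` (({..<N} \<times> {..<N}) \<rightarrow>\<^sub>E {..N}))" by (intro finite_imageI finite_PiE) auto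
  ultimately show ?thesis unfolding bounded_tables_def by (auto intro: finite_subset)
qed

lemma relabel_iso_and_mem_bounded_tables:
  assumes G: "group G" and fin: "finite (carrier G)"
  shows "G \<cong> relabel G" and "card (carrier G) \<le> N \<Longrightarrow> relabel G \<in> bounded_tables N"
proof -
  interpret group G by (rule G)
  define n where "n = card (carrier G)"
  define f where "f = (SOME f. bij_betw f {..<n} (carrier G))"
  have "\<exists>f. bij_betw f {..<n} (carrier G)"
    using ex_bij_betw_nat_finite[OF fin] unfolding n_def by (simp add: atLeast0LessThan)
  then have bij: "bij_betw f {..<n} (carrier G)" unfolding f_def by (rule someI_ex)
  define g where "g = inv_into {..<n} f"
  have bij_g: "bij_betw g (carrier G) {..<n}" unfolding g_def using bij by (rule bij_betw_inv_into)
  have relabel: "relabel G = \<lparr>carrier = {..<n},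
      monoid.mult = (\<lambda>i j. if i < n \<and> j < n then g (f i \<otimes>\<^bsub>G\<^esub> f j) else 0), one = g \<one>\<^bsub>G\<^esub>\<rparr>"
    unfolding relabel_def Let_def g_def f_def n_def by (rule refl)
  have fg: "f (g x) = x" if "x \<in> carrier G" for x
    unfolding g_def using that bij by (simp add: bij_betw_def f_inv_into_f)
  have g_less: "g x < n" if "x \<in> carrier G" for x using bij_g that by (auto dest: bij_betwE)
  have "g \<in> iso G (relabel G)"
    unfolding iso_def hom_def using g_less fg bij_g relabel by auto
  then show "G \<cong> relabel G" unfolding is_iso_def by blast
  assume N: "card (carrier G) \<le> N"
  let ?m = "\<lambda>i j. if i < n \<and> j < n then g (f i \<otimes>\<^bsub>G\<^esub> f j) else 0"
  have "?m i j \<le> N" for i j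
  proof (cases "i < n \<and> j < n")
    case True
    then have "f i \<otimes>\<^bsub>G\<^esub> f j \<in> carrier G" using bij_betwE[OF bij] by simp
    then show ?thesis using g_less True N unfolding n_def by fastforce
  qed auto
  moreover have "g \<one>\<^bsub>G\<^esub> \<le> N" using g_less[of "\<one>\<^bsub>G\<^esub>"] N n_def by simp
  ultimately have "(n, ?m, g \<one>\<^bsub>G\<^esub>)
      \<in> {..N} \<times> {m. \<forall>i j. m i j \<le> N \<and> (\<not> (i < N \<and> j < N) \<longrightarrow> m i j = 0)} \<times> {..N}"
    using N unfolding n_def by auto
  then show "relabel G \<in> bounded_tables N"
    unfolding bounded_tables_def relabel by (rule rev_image_eqI) simp
qed

lemma finite_iso_classes_card_le:
  assumes A: "\<And>G. G \<in> A \<Longrightarrow> group G \<and> finite (carrier G) \<and> card (carrier G) \<le> N"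
  shows "finite (A // {(G, H). G \<cong> H})"
proof -
  define r :: "(('a, 'b) monoid_scheme \<times> ('a, 'b) monoid_scheme) set" where "r = {(G, H). G \<cong> H}"
  have same_class: "r `` {G} = r `` {G'}" if "G \<in> A" "G' \<in> A" "relabel G = relabel G'" for G G'
  proof -
    have G: "group G" "G \<cong> relabel G" and G': "group G'" "G' \<cong> relabel G'"
      using that A relabel_iso_and_mem_bounded_tables(1) by blast+
    have "G \<cong> G'" using iso_trans[OF G(2)] group.iso_sym[OF G'] that(3) by simp
    moreover have "G' \<cong> G" using group.iso_sym[OF G(1) \<open>G \<cong> G'\<close>] .
    ultimately show ?thesis unfolding r_def using iso_trans by blast
  qed
  have "A // r = (\<lambda>G. r `` {G}) ` A" unfolding quotient_def by blast
  also have "\<dots> \<subseteq> (\<lambda>t. r `` {SOME G. G \<in> A \<and> relabel G = t}) ` (relabel ` A)"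
  proof
    fix Y assume "Y \<in> (\<lambda>G. r `` {G}) ` A"
    then obtain G where G: "G \<in> A" "Y = r `` {G}" by blast
    define G' where "G' = (SOME G'. G' \<in> A \<and> relabel G' = relabel G)"
    have G': "G' \<in> A \<and> relabel G' = relabel G" unfolding G'_def by (rule someI[of _ G]) (use G in auto)
    then have "Y = r `` {G'}" using same_class[OF G(1), of G'] G(2) by simp
    then show "Y \<in> (\<lambda>t. r `` {SOME G. G \<in> A \<and> relabel G = t}) ` (relabel ` A)"
      using G(1) unfolding G'_def by blast
  qed
  finally have "A // r \<subseteq> (\<lambda>t. r `` {SOME G. G \<in> A \<and> relabel G = t}) ` (relabel ` A)" .
  moreover have "finite (relabel ` A)"
    using finite_subset[OF _ finite_bounded_tables] A relabel_iso_and_mem_bounded_tables(2) by blast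
  ultimately show ?thesis unfolding r_def[symmetric] using finite_subset by blast
qed

theorem theorem5p2:
  fixes \<tau>\<^sub>1 :: "nat \<Rightarrow> nat multiset"
  shows "finite ({G :: 'a monoid. Cnt_cond 3 \<tau>\<^sub>1 G} // {(G, H). G \<cong> H})"
proof (rule finite_iso_classes_card_le)
  fix G :: "'a monoid" assume "G \<in> {G. Cnt_cond 3 \<tau>\<^sub>1 G}"
  then obtain \<sigma> where "Cnt_member G (derived G (carrier G)) \<tau>\<^sub>1 \<sigma>"
    using Cnt_cond_imp_Cnt_member by blast
  then interpret Cnt_member G "derived G (carrier G)" \<tau>\<^sub>1 \<sigma> .
  show "group G \<and> finite (carrier G)
      \<and> card (carrier G) \<le> 9 * (\<Sum>i<4. card (carrier (cyc_prod 3 (\<tau>\<^sub>1 i)))) ^ 4"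
    using is_group finite_carrier card_carrier_le by blast
qed

end
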